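(* Fix a Polish sample space $\Omega$ and let $F,R$ be partially ordered topological spaces that are Souslin spaces with Borel order relations. The evaluation map $$\mathrm{ev}:\mathrm{DP}_\Omega(F,R)\times F^{\mathbb N}\times R^{\mathbb N}\to\mathrm{Bool},\quad (\mathrm{dp},(x_{F,i})_{i\in\mathbb N},(x_{R,i})_{i\in\mathbb N})\mapsto\big(\forall i\in\mathbb N,\ (x_{F,i},x_{R,i})\in\mathrm{dp}\big)$$ is quasi-measurable.
   Context: A Souslin space is a Hausdorff space that is a continuous image of a Polish space; analytic sets are continuous images of Polish spaces; a subset of a Polish space is universally measurable if it is measurable for the completion of the Borel $\sigma$-algebra with respect to every Borel probability measure. Quasi-universal spaces: a set $A$ with a set of maps $\Omega\to A$ (random variables) containing constants and closed under precomposition with Borel measurable maps $\Omega\to\Omega$; a map $f:A\to B$ is quasi-measurable if $f\circ\alpha$ is a random variable of $B$ for every random variable $\alpha$ of $A$; random variables of a product are pairs (tuples) of random variables. Conventions: the random variables of $F$ (resp. $R$) are the Borel measurable maps $\Omega\to F$; those of $\mathbb N$ are the measurable maps into $\mathbb N$ (discrete); $\mathrm{Bool}=\{\bot,\top\}$ has as random variables the maps $\Omega\to\mathrm{Bool}$ whose preimage of $\top$ is universally measurable. $F^{\mathbb N}$ is the set of sequences in $F$ (quasi-measurable maps $\mathbb N\to F$), whose random variables are the maps $\beta:\Omega\to F^{\mathbb N}$ such that $\omega\mapsto\beta(\varphi(\omega))(\gamma(\omega))$ is a random variable of $F$ for every random variable $\gamma$ of $\mathbb N$ and every measurable $\varphi:\Omega\to\Omega$;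 likewise for $R^{\mathbb N}$. $\mathrm{DP}_\Omega(F,R)$ is the set of upper sets of $F^{\mathrm{op}}\times R$ ($F$ with reversed order, componentwise order) of the form $\uparrow A$ with $A$ analytic, whose random variables are the maps $\alpha:\Omega\to\mathrm{DP}_\Omega(F,R)$ with analytic feasible set $\{(\omega,x_F,x_R):(x_F,x_R)\in\alpha(\omega)\}\subseteq\Omega\times F\times R$. *)

theory Defs
  imports "HOL-Probability.Probability"
begin

definition Polish_space :: "'a topology \<Rightarrow> bool" where
  "Polish_space X \<longleftrightarrow> completely_metrizable_space X \<and> separable_space X"

text \<open>Every Polish space has cardinality at most the continuum, so (up to
  homeomorphism) every Polish space is carried by a subset of the type
  nat => real; quantifying over Polish topologies on that type is thus
  the same as quantifying over all Polish spaces.\<close>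

definition analytic_in :: "'a topology \<Rightarrow> 'a set \<Rightarrow> bool" where
  "analytic_in X A \<longleftrightarrow>
     (\<exists>(P :: (nat \<Rightarrow> real) topology) f.
        Polish_space P \<and> continuous_map P X f \<and> f ` topspace P = A)"

definition Souslin_space :: "'a topology \<Rightarrow> bool" where
  "Souslin_space X \<longleftrightarrow> Hausdorff_space X \<and> analytic_in X (topspace X)"

definition borel_order_relation :: "'a::{order,topological_space} itself \<Rightarrow> bool" where
  "borel_order_relation _ \<longleftrightarrow>
     {(x, y :: 'a). x \<le> y} \<in> sets (borel :: ('a \<times> 'a) measure)"

definition universally_measurable :: "'w::topological_space set \<Rightarrow> bool" where
  "universally_measurable A \<longleftrightarrow>
     (\<forall>M :: 'w measure. prob_space M \<and> sets M = sets borel \<longrightarrow> A \<in> sets (completion M))"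

definition rv_borel :: "('w::topological_space \<Rightarrow> 'a::topological_space) set" where
  "rv_borel = borel_measurable borel"

definition rv_nat :: "('w::topological_space \<Rightarrow> nat) set" where
  "rv_nat = measurable borel (count_space UNIV)"

definition rv_bool :: "('w::topological_space \<Rightarrow> bool) set" where
  "rv_bool = {\<alpha>. universally_measurable {\<omega>. \<alpha> \<omega>}}"

text \<open>Random variables of F^N (sequences in F; every map N -> F is quasi-measurable).\<close>
definition rv_seq :: "('w::topological_space \<Rightarrow> (nat \<Rightarrow> 'a::topological_space)) set" where
  "rv_seq = {\<beta>. \<forall>\<phi> \<in> (borel_measurable borel :: ('w \<Rightarrow> 'w) set). \<forall>\<gamma> \<in> (rv_nat :: ('w \<Rightarrow> nat) set).
                  (\<lambda>\<omega>. \<beta> (\<phi> \<omega>) (\<gamma> \<omega>)) \<in> rv_borel}"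

definition upclosure_op :: "('f::order \<times> 'r::order) set \<Rightarrow> ('f \<times> 'r) set" where
  "upclosure_op A = {(x, y). \<exists>(a, b) \<in> A. x \<le> a \<and> b \<le> y}"

definition DP :: "('f::{order,topological_space} \<times> 'r::{order,topological_space}) set set" where
  "DP = {upclosure_op A | A. analytic_in euclidean A}"

definition rv_DP ::
  "('w::topological_space \<Rightarrow> ('f::{order,topological_space} \<times> 'r::{order,topological_space}) set) set" where
  "rv_DP = {\<alpha>. (\<forall>\<omega>. \<alpha> \<omega> \<in> DP) \<and>
               analytic_in (euclidean :: ('w \<times> 'f \<times> 'r) topology) {(\<omega>, x, y). (x, y) \<in> \<alpha> \<omega>}}"

definition rv_prod3 :: "('w \<Rightarrow> 'a) set \<Rightarrow> ('w \<Rightarrow> 'b) set \<Rightarrow> ('w \<Rightarrow> 'c) set \<Rightarrow> ('w \<Rightarrow> 'a \<times> 'b \<times> 'c) set" where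
  "rv_prod3 RA RB RC = {\<alpha>. (\<lambda>\<omega>. fst (\<alpha> \<omega>)) \<in> RA \<and> (\<lambda>\<omega>. fst (snd (\<alpha> \<omega>))) \<in> RB
                           \<and> (\<lambda>\<omega>. snd (snd (\<alpha> \<omega>))) \<in> RC}"

definition quasi_measurable :: "('w \<Rightarrow> 'a) set \<Rightarrow> ('w \<Rightarrow> 'b) set \<Rightarrow> ('a \<Rightarrow> 'b) \<Rightarrow> bool" where
  "quasi_measurable RA RB f \<longleftrightarrow> (\<forall>\<alpha> \<in> RA. f \<circ> \<alpha> \<in> RB)"

definition ev :: "('f \<times> 'r) set \<times> (nat \<Rightarrow> 'f) \<times> (nat \<Rightarrow> 'r) \<Rightarrow> bool" where
  "ev = (\<lambda>(dp, xF, xR). \<forall>i. (xF i, xR i) \<in> dp)"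

end

theory Submission
  imports Defs
begin

(* The event {\<omega>. \<forall>i. (x_F(\<omega>)_i, x_R(\<omega>)_i) \<in> dp(\<omega>)} is the intersection over i of the
   preimages of the analytic feasible set S \<subseteq> \<Omega> \<times> F \<times> R under \<omega> \<mapsto> (\<omega>, x_F(\<omega>)_i, x_R(\<omega>)_i).
   These maps are Borel measurable into the product because Souslin spaces have countable networks,
   which make open subsets of the product countable unions of open rectangles. Analytic sets are
   universally measurable (Lusin), and universal measurability passes to Borel preimages and
   countable intersections.
   Lusin's theorem is proved by inner approximation: for a continuous f on a Polish space with
   dense sequence D and c below the outer measure of its image, one bounds, scale by scale, how
   many points of D are needed, keeping the outer measure of the image above c. The resulting
   closed levels shrink to a compact set K, and the closures of their images to f(K), a closed
   subset of the image of measure at least c. *)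

section \<open>Completions\<close>

lemma (in finite_measure) sets_completionI_inner_approx:
  assumes "A \<subseteq> space M"
    and inner: "\<And>c. c < outer_measure_of M A \<Longrightarrow> \<exists>B\<in>sets M. B \<subseteq> A \<and> c \<le> emeasure M B"
  shows "A \<in> sets (completion M)"
proof -
  obtain E where E: "E \<in> sets M" "A \<subseteq> E" "outer_measure_of M A = emeasure M E"
    using outer_measure_of_attain[OF assms(1)] by blast
  have "{B \<in> sets M. B \<subseteq> A} \<noteq> {}"
    using sets.empty_sets by blast
  from ennreal_SUP_countable_SUP[OF this, of "emeasure M"]
  obtain g :: "nat \<Rightarrow> ennreal" where g: "range g \<subseteq> emeasure M ` {B \<in> sets M. B \<subseteq> A}"
    and sup: "(SUP B \<in> {B \<in> sets M. B \<subseteq> A}. emeasure M B) = (SUP n. g n)"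
    by blast
  have "\<forall>n. \<exists>B. (B \<in> sets M \<and> B \<subseteq> A) \<and> g n = emeasure M B"
    using g by (auto simp: image_subset_iff image_iff)
  then obtain B where B: "\<And>n. B n \<in> sets M" "\<And>n. B n \<subseteq> A" and gB: "\<And>n. g n = emeasure M (B n)"
    by metis
  define U where "U = (\<Union>n. B n)"
  have U: "U \<in> sets M" "U \<subseteq> A" using B by (auto simp: U_def)
  have "outer_measure_of M A \<le> (SUP B \<in> {B \<in> sets M. B \<subseteq> A}. emeasure M B)"
    by (rule dense_le) (use inner in \<open>fastforce intro: SUP_upper2\<close>)
  also have "\<dots> \<le> emeasure M U"
    unfolding sup gB U_def using B by (intro SUP_least emeasure_mono) auto
  finally have "emeasure M U = emeasure M E"
    using E U by (metis antisym emeasure_mono order_trans)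
  then have "emeasure M (E - U) = 0"
    using E U by (simp add: emeasure_Diff)
  then have "E - U \<in> null_sets M" using E U by auto
  then show ?thesis
    using E U by (intro sets_completionI[of A U "A - U" "E - U"]) auto
qed

lemma sets_completion_vimage:
  assumes f: "f \<in> measurable M N" and S: "S \<in> sets (completion (distr M N f))"
  shows "f -` S \<inter> space M \<in> sets (completion M)"
proof -
  obtain S0 S1 S2 where S: "S = S0 \<union> S1" "S1 \<subseteq> S2" "S2 \<in> null_sets (distr M N f)" "S0 \<in> sets N"
    using sets_completionE[OF S] by auto
  have "f -` S2 \<inter> space M \<in> null_sets M" using S(3) null_sets_distr_iff[OF f] by auto
  then show ?thesis
    using S f
    by (intro sets_completionI[of _ "f -` S0 \<inter> space M" "f -` S1 \<inter> space M" "f -` S2 \<inter> space M"])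
      (auto intro: measurable_sets)
qed

section \<open>Lusin's theorem\<close>

context Metric_space
begin

lemma mtotally_bounded_mcball_cover:
  assumes "S \<subseteq> M"
    and cover: "\<And>e. e > 0 \<Longrightarrow> \<exists>F. finite F \<and> F \<subseteq> M \<and> S \<subseteq> (\<Union>c\<in>F. mcball c e)"
  shows "mtotally_bounded S"
  unfolding mtotally_bounded_def
proof (intro allI impI)
  fix e :: real assume "e > 0"
  then obtain F where F: "finite F" "F \<subseteq> M" "S \<subseteq> (\<Union>c\<in>F. mcball c (e / 3))"
    using cover[of "e / 3"] by auto
  define F' where "F' = {c \<in> F. mcball c (e / 3) \<inter> S \<noteq> {}}"
  have "\<forall>c\<in>F'. \<exists>y. y \<in> mcball c (e / 3) \<inter> S"
    unfolding F'_def by blast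
  then obtain s where s: "\<And>c. c \<in> F' \<Longrightarrow> s c \<in> mcball c (e / 3) \<inter> S"
    by metis
  have "S \<subseteq> (\<Union>x\<in>s ` F'. mball x e)"
  proof
    fix x assume "x \<in> S"
    then obtain c where c: "c \<in> F" "x \<in> mcball c (e / 3)"
      using F(3) by auto
    then have "c \<in> F'"
      using \<open>x \<in> S\<close> unfolding F'_def by auto
    then have sc: "s c \<in> mcball c (e / 3)"
      using s by auto
    have "d (s c) x \<le> d (s c) c + d c x"
      using sc c by (intro triangle) auto
    also have "\<dots> < e"
    proof -
      have "d c (s c) \<le> e / 3" "d c x \<le> e / 3"
        using sc c by auto
      then show ?thesis
        using commute[of "s c" c] \<open>e > 0\<close> by linarith
    qed
    finally show "x \<in> (\<Union>x\<in>s ` F'. mball x e)"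
      using \<open>c \<in> F'\<close> sc c by auto
  qed
  moreover have "finite (s ` F')" "s ` F' \<subseteq> S"
    using F(1) s by (auto simp: F'_def)
  ultimately show "\<exists>K. finite K \<and> K \<subseteq> S \<and> S \<subseteq> (\<Union>x\<in>K. mball x e)"
    by blast
qed

context
  fixes L :: "nat \<Rightarrow> 'a set"
  assumes complete: "mcomplete"
    and decseq: "decseq L"
    and closed: "\<And>n. closedin mtopology (L n)"
    and shrinking: "\<And>e. e > 0 \<Longrightarrow> \<exists>n F. finite F \<and> F \<subseteq> M \<and> L n \<subseteq> (\<Union>c\<in>F. mcball c e)"
begin

lemma decseq_shrinking_convergent_subseq:
  assumes p: "\<And>n. p n \<in> L n"
  shows "\<exists>l r. l \<in> (\<Inter>n. L n) \<and> strict_mono r \<and> limitin mtopology (p \<circ> r) l sequentially"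
proof -
  have LM: "L n \<subseteq> M" for n
    using closedin_subset[OF closed] by simp
  have pM: "p k \<in> M" for k
    using p LM by blast
  have "mtotally_bounded (range p)"
  proof (rule mtotally_bounded_mcball_cover)
    show "range p \<subseteq> M"
      using pM by blast
    fix e :: real assume "e > 0"
    then obtain n F where F: "finite F" "F \<subseteq> M" "L n \<subseteq> (\<Union>c\<in>F. mcball c e)"
      using shrinking by meson
    have "range p \<subseteq> (\<Union>c\<in>p ` {..<n} \<union> F. mcball c e)"
    proof
      fix x assume "x \<in> range p"
      then obtain k where k: "x = p k" by auto
      show "x \<in> (\<Union>c\<in>p ` {..<n} \<union> F. mcball c e)"
      proof (cases "k < n")
        case True
        have "p k \<in> mcball (p k) e"
          using pM \<open>e > 0\<close> by simp
        then show ?thesis using k True by blast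
      next
        case False
        then have "p k \<in> L n"
          using p[of k] decseqD[OF decseq, of n k] by auto
        then show ?thesis using F(3) k by blast
      qed
    qed
    then show "\<exists>F. finite F \<and> F \<subseteq> M \<and> range p \<subseteq> (\<Union>c\<in>F. mcball c e)"
      using F(1,2) pM by (intro exI[of _ "p ` {..<n} \<union> F"]) auto
  qed
  then have "compactin mtopology (mtopology closure_of range p)"
    using mtotally_bounded_eq_compact_closure_of[OF complete] by auto
  moreover have "range p \<subseteq> mtopology closure_of range p"
    using pM by (intro closure_of_subset) auto
  ultimately obtain l r where r: "strict_mono r" and lim: "limitin mtopology (p \<circ> r) l sequentially"
    unfolding compactin_sequentially by (meson image_subset_iff rangeI)
  have "l \<in> L n" for n
  proof (rule limitin_closedin[OF lim closed])
    have "(p \<circ> r) k \<in> L n" if "n \<le> k" for k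
    proof -
      have "n \<le> r k"
        using seq_suble[OF r, of k] that by linarith
      then show ?thesis
        using p[of "r k"] decseqD[OF decseq] by auto
    qed
    then show "\<forall>\<^sub>F k in sequentially. (p \<circ> r) k \<in> L n"
      using eventually_sequentially by blast
  qed simp
  then show ?thesis
    using r lim by blast
qed

lemma compactin_Inter_decseq_shrinking: "compactin mtopology (\<Inter>n. L n)"
  unfolding compactin_sequentially
proof (intro conjI allI impI)
  show "(\<Inter>n. L n) \<subseteq> M"
    using closedin_subset[OF closed, of 0] by auto
  fix p :: "nat \<Rightarrow> 'a" assume "range p \<subseteq> (\<Inter>n. L n)"
  then show "\<exists>l r. l \<in> (\<Inter>n. L n) \<and> strict_mono r \<and> limitin mtopology (p \<circ> r) l sequentially"
    by (intro decseq_shrinking_convergent_subseq) auto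
qed

lemma decseq_shrinking_subset_open:
  assumes W: "openin mtopology W" "(\<Inter>n. L n) \<subseteq> W"
  shows "\<exists>n. L n \<subseteq> W"
proof (rule ccontr)
  assume "\<nexists>n. L n \<subseteq> W"
  then have "\<forall>n. \<exists>x. x \<in> L n \<and> x \<notin> W"
    by blast
  then obtain p where p: "\<And>n. p n \<in> L n" "\<And>n. p n \<notin> W"
    by metis
  then obtain l r where l: "l \<in> (\<Inter>n. L n)" and lim: "limitin mtopology (p \<circ> r) l sequentially"
    using decseq_shrinking_convergent_subseq[OF p(1)] by blast
  have "l \<in> M - W"
  proof (rule limitin_closedin[OF lim])
    show "closedin mtopology (M - W)"
      using closedin_diff[OF closedin_topspace W(1)] by simp
    show "\<forall>\<^sub>F k in sequentially. (p \<circ> r) k \<in> M - W"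
      using p closedin_subset[OF closed] by (intro always_eventually) auto
  qed simp
  then show False
    using l W(2) by auto
qed

lemma Inter_closure_image_decseq_shrinking:
  fixes f :: "'a \<Rightarrow> 'x::topological_space"
  assumes Hausdorff: "Hausdorff_space (euclidean :: 'x topology)"
    and f: "continuous_map mtopology euclidean f"
  shows "(\<Inter>n. closure (f ` L n)) \<subseteq> f ` (\<Inter>n. L n)"
proof
  fix y assume y: "y \<in> (\<Inter>n. closure (f ` L n))"
  show "y \<in> f ` (\<Inter>n. L n)"
  proof (rule ccontr)
    assume "y \<notin> f ` (\<Inter>n. L n)"
    then have disj: "disjnt {y} (f ` (\<Inter>n. L n))"
      by simp
    have compact: "compactin euclidean (f ` (\<Inter>n. L n))"
      using image_compactin[OF compactin_Inter_decseq_shrinking f] .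
    obtain U V where UV: "openin euclidean U" "openin euclidean V" "{y} \<subseteq> U"
        "f ` (\<Inter>n. L n) \<subseteq> V" "disjnt U V"
      using Hausdorff_space_compact_separation[OF Hausdorff _ compact disj] by auto
    have "openin mtopology {p \<in> M. f p \<in> V}"
      using openin_continuous_map_preimage[OF f UV(2)] by simp
    moreover have "(\<Inter>n. L n) \<subseteq> {p \<in> M. f p \<in> V}"
      using UV(4) closedin_subset[OF closed, of 0] by auto
    ultimately obtain n where "L n \<subseteq> {p \<in> M. f p \<in> V}"
      using decseq_shrinking_subset_open by presburger
    then have "f ` L n \<subseteq> V"
      by auto
    then have "U \<inter> f ` L n = {}"
      using UV(5) by (auto simp: disjnt_def)
    then have "U \<inter> closure (f ` L n) = {}"
      using open_Int_closure_eq_empty[of U "f ` L n"] UV(1) by simp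
    then show False
      using y UV(3) by auto
  qed
qed

end

lemma separable_space_dense_sequence:
  assumes "separable_space mtopology" "M \<noteq> {}"
  obtains D :: "nat \<Rightarrow> 'a" where "range D \<subseteq> M" "mtopology closure_of range D = M"
proof -
  obtain C where C: "countable C" "C \<subseteq> M" "mtopology closure_of C = M"
    using assms(1) unfolding separable_space_def by auto
  moreover have "C \<noteq> {}"
    using C(3) assms(2) by auto
  ultimately show thesis
    using that[of "from_nat_into C"] by simp
qed

text \<open>For a dense sequence D these are the levels of the Souslin scheme in Lusin's proof: m i
  bounds the number of points of D whose 2^-i-balls may be used at scale i.\<close>

definition sieve :: "(nat \<Rightarrow> 'a) \<Rightarrow> (nat \<Rightarrow> nat) \<Rightarrow> nat \<Rightarrow> 'a set" where
  "sieve D m n = {p \<in> M. \<forall>i<n. \<exists>k\<le>m i. d (D k) p \<le> (1/2) ^ i}"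

lemma sieve_0 [simp]: "sieve D m 0 = M"
  by (simp add: sieve_def)

lemma decseq_sieve: "decseq (sieve D m)"
  by (auto simp: decseq_def sieve_def)

lemma sieve_cong: "(\<And>i. i < n \<Longrightarrow> m i = m' i) \<Longrightarrow> sieve D m n = sieve D m' n"
  by (simp add: sieve_def)

lemma closedin_sieve:
  assumes "range D \<subseteq> M"
  shows "closedin mtopology (sieve D m n)"
proof -
  have "sieve D m n = \<Inter>(insert M ((\<lambda>i. \<Union>k\<le>m i. mcball (D k) ((1/2) ^ i)) ` {..<n}))"
    using assms unfolding sieve_def mcball_def image_subset_iff by blast
  also have "closedin mtopology \<dots>"
    by (intro closedin_Inter) (auto intro!: closedin_Union)
  finally show ?thesis .
qed

lemma sieve_Suc_subset_mcballs:
  assumes "range D \<subseteq> M"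
  shows "sieve D m (Suc n) \<subseteq> (\<Union>k\<le>m n. mcball (D k) ((1/2) ^ n))"
  using assms unfolding sieve_def mcball_def image_subset_iff by blast

lemma sieve_shrinking:
  assumes "range D \<subseteq> M" "e > 0"
  shows "\<exists>n F. finite F \<and> F \<subseteq> M \<and> sieve D m n \<subseteq> (\<Union>c\<in>F. mcball c e)"
proof -
  obtain n where "(1/2) ^ n < e"
    using real_arch_pow_inv[OF assms(2), of "1/2"] by auto
  then have "sieve D m (Suc n) \<subseteq> (\<Union>c\<in>D ` {..m n}. mcball c e)"
    using sieve_Suc_subset_mcballs[OF assms(1), of m n] mcball_subset_concentric[of "(1/2) ^ n" e]
    by fastforce
  then show ?thesis
    using assms(1) by (intro exI[of _ "Suc n"] exI[of _ "D ` {..m n}"]) auto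
qed

lemma sieve_update_Suc:
  "sieve D (m(n := j)) (Suc n) = sieve D m n \<inter> {p. \<exists>k\<le>j. d (D k) p \<le> (1/2) ^ n}"
  by (auto simp: sieve_def less_Suc_eq)

lemma incseq_sieve_update: "incseq (\<lambda>j. sieve D (m(n := j)) (Suc n))"
  unfolding incseq_def sieve_update_Suc by (auto intro: order_trans)

lemma UN_sieve_update:
  assumes "mtopology closure_of range D = M"
  shows "(\<Union>j. sieve D (m(n := j)) (Suc n)) = sieve D m n"
proof -
  have "\<exists>k. d (D k) p \<le> (1/2) ^ n" if "p \<in> M" for p
  proof -
    have "p \<in> mtopology closure_of range D"
      using assms that by simp
    moreover have "(1/2 :: real) ^ n > 0"
      by simp
    ultimately obtain k where "D k \<in> mcball p ((1/2) ^ n)"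
      unfolding metric_closure_of_alt by blast
    then show ?thesis
      using commute by auto
  qed
  then show ?thesis
    unfolding sieve_update_Suc by (auto simp: sieve_def) (meson order_refl)
qed

lemma sieve_outer_measure_gt:
  fixes f :: "'a \<Rightarrow> 'x" and N :: "'x measure"
  assumes dense: "mtopology closure_of range D = M" and space: "space N = UNIV"
    and c: "c < outer_measure_of N (f ` M)"
  shows "\<exists>m. \<forall>n. c < outer_measure_of N (f ` sieve D m n)"
proof -
  have step: "\<exists>j. c < outer_measure_of N (f ` sieve D (m(n := j)) (Suc n))"
    if "c < outer_measure_of N (f ` sieve D m n)" for m n
  proof -
    have "incseq (\<lambda>j. f ` sieve D (m(n := j)) (Suc n))"
      using incseq_sieve_update[of D m n] unfolding incseq_def by (blast intro: image_mono)
    moreover have "(\<Union>j. f ` sieve D (m(n := j)) (Suc n)) = f ` sieve D m n"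
      using UN_sieve_update[OF dense, of m n] by blast
    ultimately have "outer_measure_of N (f ` sieve D m n) =
        (SUP j. outer_measure_of N (f ` sieve D (m(n := j)) (Suc n)))"
      using SUP_outer_measure_of_incseq[of "\<lambda>j. f ` sieve D (m(n := j)) (Suc n)" N] space by simp
    then show ?thesis
      using that by (simp add: less_SUP_iff)
  qed
  \<comment> \<open>g n holds the bounds chosen for the scales below n; later stages never change them.\<close>
  have "\<exists>g. \<forall>n. c < outer_measure_of N (f ` sieve D (g n) n) \<and> g (Suc n) = (g n)(n := g (Suc n) n)"
  proof (rule dependent_nat_choice)
    show "\<exists>m. c < outer_measure_of N (f ` sieve D m 0)"
      using c by simp
    fix m n assume "c < outer_measure_of N (f ` sieve D m n)"
    then obtain j where "c < outer_measure_of N (f ` sieve D (m(n := j)) (Suc n))"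
      using step by blast
    then show "\<exists>m'. c < outer_measure_of N (f ` sieve D m' (Suc n)) \<and> m' = m(n := m' n)"
      by (intro exI[of _ "m(n := j)"]) simp
  qed
  then obtain g where g: "\<And>n. c < outer_measure_of N (f ` sieve D (g n) n)"
    and g_Suc: "\<And>n. g (Suc n) = (g n)(n := g (Suc n) n)"
    by blast
  have g_prefix: "g n i = g (Suc i) i" if "i < n" for n i
    using that
  proof (induction n)
    case (Suc n)
    show ?case
    proof (cases "i = n")
      case False
      then have "g (Suc n) i = g n i"
        using fun_cong[OF g_Suc[of n], of i] by simp
      with Suc False show ?thesis
        by simp
    qed simp
  qed simp
  have "sieve D (g n) n = sieve D (\<lambda>i. g (Suc i) i) n" for n
    by (rule sieve_cong) (rule g_prefix)
  then show ?thesis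
    using g by (intro exI[of _ "\<lambda>i. g (Suc i) i"]) simp
qed

theorem continuous_image_sets_completion:
  fixes f :: "'a \<Rightarrow> 'x::topological_space" and N :: "'x measure"
  assumes complete: "mcomplete" and separable: "separable_space mtopology"
    and N: "finite_measure N" "sets N = sets borel"
    and Hausdorff: "Hausdorff_space (euclidean :: 'x topology)"
    and f: "continuous_map mtopology euclidean f"
  shows "f ` M \<in> sets (completion N)"
proof (cases "M = {}")
  case False
  interpret N: finite_measure N by fact
  have space: "space N = UNIV"
    using sets_eq_imp_space_eq[OF N(2)] by simp
  obtain D :: "nat \<Rightarrow> 'a" where D: "range D \<subseteq> M" "mtopology closure_of range D = M"
    using separable_space_dense_sequence[OF separable False] by blast
  show ?thesis
  proof (rule N.sets_completionI_inner_approx)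
    show "f ` M \<subseteq> space N"
      by (simp add: space)
    fix c assume "c < outer_measure_of N (f ` M)"
    then obtain m where m: "\<And>n. c < outer_measure_of N (f ` sieve D m n)"
      using sieve_outer_measure_gt[OF D(2) space] by blast
    define B where "B = (\<Inter>n. closure (f ` sieve D m n))"
    have B_sets: "B \<in> sets N"
      by (simp add: B_def N(2))
    have "(\<Inter>n. sieve D m n) \<subseteq> M"
      using INT_lower[of 0 UNIV "sieve D m"] by simp
    then have B_subset: "B \<subseteq> f ` M"
      using Inter_closure_image_decseq_shrinking[OF complete decseq_sieve[of D m]
          closedin_sieve[OF D(1)] sieve_shrinking[OF D(1)] Hausdorff f]
      unfolding B_def by blast
    have "c < emeasure N (closure (f ` sieve D m n))" for n
    proof -
      have "closure (f ` sieve D m n) \<in> sets N"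
        by (simp add: N(2) borel_closed)
      then have "outer_measure_of N (f ` sieve D m n) \<le> emeasure N (closure (f ` sieve D m n))"
        by (metis outer_measure_of_mono[OF closure_subset] outer_measure_of_eq)
      with m[of n] show ?thesis
        by (rule order_less_le_trans)
    qed
    then have "c \<le> (INF n. emeasure N (closure (f ` sieve D m n)))"
      by (intro INF_greatest less_imp_le)
    also have "\<dots> = emeasure N B"
      unfolding B_def using N.emeasure_finite
      by (intro INF_emeasure_decseq')
        (auto simp: N(2) decseq_def intro!: closure_mono image_mono decseqD[OF decseq_sieve])
    finally show "\<exists>B\<in>sets N. B \<subseteq> f ` M \<and> c \<le> emeasure N B"
      using B_sets B_subset by blast
  qed
qed simp

end

lemma analytic_in_sets_completion:
  fixes N :: "'x::topological_space measure"
  assumes "analytic_in euclidean A" "finite_measure N" "sets N = sets borel"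
    and "Hausdorff_space (euclidean :: 'x topology)"
  shows "A \<in> sets (completion N)"
proof -
  obtain P :: "(nat \<Rightarrow> real) topology" and g where
    P: "Polish_space P" and g: "continuous_map P euclidean g" "g ` topspace P = A"
    using assms(1) unfolding analytic_in_def by blast
  obtain M d where "Metric_space M d" "Metric_space.mcomplete M d" "P = Metric_space.mtopology M d"
    using P unfolding Polish_space_def completely_metrizable_space_def by auto
  then show ?thesis
    using Metric_space.continuous_image_sets_completion[of M d N g] P g assms(2-)
    unfolding Polish_space_def by (auto simp: Metric_space.topspace_mtopology)
qed

lemma universally_measurable_vimage_analytic:
  fixes G :: "'w::topological_space \<Rightarrow> 'x::topological_space"
  assumes "analytic_in euclidean S" "Hausdorff_space (euclidean :: 'x topology)"
    and G: "G \<in> borel_measurable borel"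
  shows "universally_measurable (G -` S)"
  unfolding universally_measurable_def
proof (intro allI impI)
  fix M :: "'w measure" assume M: "prob_space M \<and> sets M = sets borel"
  then have G_M: "G \<in> borel_measurable M"
    using G measurable_cong_sets by blast
  then have "finite_measure (distr M borel G)"
    using M prob_space.prob_space_distr prob_space.finite_measure by blast
  then have "S \<in> sets (completion (distr M borel G))"
    using analytic_in_sets_completion[OF assms(1) _ _ assms(2)] by simp
  then have "G -` S \<inter> space M \<in> sets (completion M)"
    by (rule sets_completion_vimage[OF G_M])
  then show "G -` S \<in> sets (completion M)"
    using sets_eq_imp_space_eq[of M borel] M by simp
qed

lemma universally_measurable_INT:
  "(\<And>i :: nat. universally_measurable (A i)) \<Longrightarrow> universally_measurable (\<Inter>i. A i)"
  unfolding universally_measurable_def by auto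

section \<open>Countable networks\<close>

definition countable_network :: "'a::topological_space set set \<Rightarrow> bool" where
  "countable_network \<N> \<longleftrightarrow>
     countable \<N> \<and> (\<forall>U x. open U \<and> x \<in> U \<longrightarrow> (\<exists>N\<in>\<N>. x \<in> N \<and> N \<subseteq> U))"

lemma countable_networkD:
  "countable_network \<N> \<Longrightarrow> open U \<Longrightarrow> x \<in> U \<Longrightarrow> \<exists>N\<in>\<N>. x \<in> N \<and> N \<subseteq> U"
  unfolding countable_network_def by blast

lemma countable_network_continuous_image:
  fixes g :: "'p \<Rightarrow> 'a::topological_space"
  assumes "second_countable P" and g: "continuous_map P euclidean g" "g ` topspace P = UNIV"
  shows "\<exists>\<N> :: 'a set set. countable_network \<N>"
proof -
  obtain \<B> where \<B>: "countable \<B>"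
    "\<And>U x. openin P U \<Longrightarrow> x \<in> U \<Longrightarrow> \<exists>V\<in>\<B>. x \<in> V \<and> V \<subseteq> U"
    using assms(1) unfolding second_countable_def by meson
  have "\<exists>N\<in>image g ` \<B>. x \<in> N \<and> N \<subseteq> U" if "open U" "x \<in> U" for U x
  proof -
    obtain p where p: "p \<in> topspace P" "x = g p"
      using g(2) by (metis UNIV_I imageE)
    have "openin P {q \<in> topspace P. g q \<in> U}"
      using openin_continuous_map_preimage[OF g(1)] \<open>open U\<close> by simp
    then obtain V where V: "V \<in> \<B>" "p \<in> V" "V \<subseteq> {q \<in> topspace P. g q \<in> U}"
      using \<B>(2) p \<open>x \<in> U\<close> by (metis (no_types, lifting) mem_Collect_eq)
    then have "g ` V \<in> image g ` \<B>" "x \<in> g ` V" "g ` V \<subseteq> U"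
      using p by auto
    then show ?thesis by blast
  qed
  moreover have "countable (image g ` \<B>)"
    using \<B>(1) by simp
  ultimately show ?thesis
    unfolding countable_network_def by blast
qed

lemma (in Metric_space) separable_imp_second_countable:
  assumes "separable_space mtopology"
  shows "second_countable mtopology"
proof -
  obtain C where C: "countable C" "C \<subseteq> M" "mtopology closure_of C = M"
    using assms unfolding separable_space_def by auto
  define \<B> where "\<B> = (\<lambda>(c, n). mball c (1 / Suc n)) ` (C \<times> (UNIV :: nat set))"
  have "\<exists>V\<in>\<B>. x \<in> V \<and> V \<subseteq> U" if U: "openin mtopology U" "x \<in> U" for U x
  proof -
    have x: "x \<in> M" using U openin_subset by fastforce
    obtain r where "r > 0" "mball x r \<subseteq> U" using U openin_mtopology by meson
    then obtain n :: nat where n: "1 / Suc n < r / 2"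
      using nat_approx_posE[of "r / 2"] by auto
    have "x \<in> mtopology closure_of C" "1 / real (Suc n) > 0"
      using C(3) x by auto
    then obtain c where c: "c \<in> C" "c \<in> mball x (1 / Suc n)"
      unfolding metric_closure_of by blast
    have "mball c (1 / Suc n) \<subseteq> mball x r"
    proof
      fix y assume y: "y \<in> mball c (1 / Suc n)"
      have "d x y \<le> d x c + d c y"
        using y x c C(2) by (intro triangle) auto
      also have "\<dots> < r"
        using y c n by auto
      finally show "y \<in> mball x r" using x y by auto
    qed
    moreover have "x \<in> mball c (1 / Suc n)"
      using c x commute by auto
    moreover have "mball c (1 / Suc n) \<in> \<B>"
      using c(1) unfolding \<B>_def by auto
    ultimately show ?thesis
      using \<open>mball x r \<subseteq> U\<close> by blast
  qed
  moreover have "countable \<B>" "\<forall>V\<in>\<B>. openin mtopology V"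
    using C(1) by (auto simp: \<B>_def)
  ultimately show ?thesis
    unfolding second_countable_def by blast
qed

lemma Polish_space_imp_second_countable:
  assumes "Polish_space X"
  shows "second_countable X"
proof -
  obtain M d where "Metric_space M d" "X = Metric_space.mtopology M d"
    using assms unfolding Polish_space_def completely_metrizable_space_def by auto
  then show ?thesis
    using assms Metric_space.separable_imp_second_countable unfolding Polish_space_def by blast
qed

lemma Polish_space_countable_network:
  assumes "Polish_space (euclidean :: 'a::topological_space topology)"
  shows "\<exists>\<N> :: 'a set set. countable_network \<N>"
  using Polish_space_imp_second_countable[OF assms]
  by (rule countable_network_continuous_image[of _ id]) auto

lemma Souslin_space_countable_network:
  assumes "Souslin_space (euclidean :: 'a::topological_space topology)"
  shows "\<exists>\<N> :: 'a set set. countable_network \<N>"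
proof -
  obtain P :: "(nat \<Rightarrow> real) topology" and g where
    "Polish_space P" "continuous_map P euclidean g" "g ` topspace P = (UNIV :: 'a set)"
    using assms unfolding Souslin_space_def analytic_in_def by auto
  then show ?thesis
    by (intro countable_network_continuous_image[of P g])
      (auto intro: Polish_space_imp_second_countable)
qed

lemma countable_network_Times:
  assumes "countable_network \<N>\<^sub>1" "countable_network \<N>\<^sub>2"
  shows "countable_network ((\<lambda>(N\<^sub>1, N\<^sub>2). N\<^sub>1 \<times> N\<^sub>2) ` (\<N>\<^sub>1 \<times> \<N>\<^sub>2))"
  unfolding countable_network_def
proof (intro conjI allI impI)
  show "countable ((\<lambda>(N\<^sub>1, N\<^sub>2). N\<^sub>1 \<times> N\<^sub>2) ` (\<N>\<^sub>1 \<times> \<N>\<^sub>2))"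
    using assms unfolding countable_network_def by auto
  fix U and z :: "'a \<times> 'b" assume Uz: "open U \<and> z \<in> U"
  obtain A B where AB: "open A" "open B" "z \<in> A \<times> B" "A \<times> B \<subseteq> U"
    using open_prod_elim[of U z] Uz by blast
  obtain N\<^sub>1 where "N\<^sub>1 \<in> \<N>\<^sub>1" "fst z \<in> N\<^sub>1" "N\<^sub>1 \<subseteq> A"
    using countable_networkD[OF assms(1) AB(1)] AB(3) by (auto simp: mem_Times_iff)
  moreover obtain N\<^sub>2 where "N\<^sub>2 \<in> \<N>\<^sub>2" "snd z \<in> N\<^sub>2" "N\<^sub>2 \<subseteq> B"
    using countable_networkD[OF assms(2) AB(2)] AB(3) by (auto simp: mem_Times_iff)
  ultimately show "\<exists>N\<in>(\<lambda>(N\<^sub>1, N\<^sub>2). N\<^sub>1 \<times> N\<^sub>2) ` (\<N>\<^sub>1 \<times> \<N>\<^sub>2). z \<in> N \<and> N \<subseteq> U"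
    using AB(4)
    by (intro bexI[of _ "N\<^sub>1 \<times> N\<^sub>2"]) (auto simp: mem_Times_iff)
qed

text \<open>The Borel \<sigma>-algebra of a product need not be generated by measurable rectangles; a countable
  network in each factor makes every open set of the product a countable union of open rectangles.\<close>

lemma borel_measurable_Pair_countable_network:
  fixes f :: "'m \<Rightarrow> 'a::topological_space" and g :: "'m \<Rightarrow> 'b::topological_space"
    and \<N>\<^sub>1 :: "'a set set" and \<N>\<^sub>2 :: "'b set set"
  assumes "countable_network \<N>\<^sub>1" "countable_network \<N>\<^sub>2"
    and f: "f \<in> borel_measurable M" and g: "g \<in> borel_measurable M"
  shows "(\<lambda>x. (f x, g x)) \<in> borel_measurable M"
proof (rule borel_measurableI)
  fix S :: "('a \<times> 'b) set" assume "open S"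
  have \<N>: "countable_network ((\<lambda>(N\<^sub>1, N\<^sub>2). N\<^sub>1 \<times> N\<^sub>2) ` (\<N>\<^sub>1 \<times> \<N>\<^sub>2))"
    using assms(1,2) by (rule countable_network_Times)
  define T where "T = {N \<in> (\<lambda>(N\<^sub>1, N\<^sub>2). N\<^sub>1 \<times> N\<^sub>2) ` (\<N>\<^sub>1 \<times> \<N>\<^sub>2).
    \<exists>A B. open A \<and> open B \<and> N \<subseteq> A \<times> B \<and> A \<times> B \<subseteq> S}"
  have "\<forall>N\<in>T. \<exists>A B. open A \<and> open B \<and> N \<subseteq> A \<times> B \<and> A \<times> B \<subseteq> S"
    unfolding T_def by blast
  then obtain A B where AB: "\<And>N. N \<in> T \<Longrightarrow> open (A N) \<and> open (B N) \<and> N \<subseteq> A N \<times> B N \<and> A N \<times> B N \<subseteq> S"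
    by metis
  have S: "S = (\<Union>N\<in>T. A N \<times> B N)"
  proof
    show "(\<Union>N\<in>T. A N \<times> B N) \<subseteq> S"
      using AB by blast
    show "S \<subseteq> (\<Union>N\<in>T. A N \<times> B N)"
    proof
      fix z assume "z \<in> S"
      then obtain A' B' where A'B': "open A'" "open B'" "z \<in> A' \<times> B'" "A' \<times> B' \<subseteq> S"
        using open_prod_elim[OF \<open>open S\<close>] by blast
      moreover obtain N where "N \<in> (\<lambda>(N\<^sub>1, N\<^sub>2). N\<^sub>1 \<times> N\<^sub>2) ` (\<N>\<^sub>1 \<times> \<N>\<^sub>2)" "z \<in> N" "N \<subseteq> A' \<times> B'"
        using countable_networkD[OF \<N> open_Times[OF A'B'(1,2)] A'B'(3)] by blast
      ultimately have "N \<in> T" "z \<in> N"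
        unfolding T_def by blast+
      then show "z \<in> (\<Union>N\<in>T. A N \<times> B N)"
        using AB by blast
    qed
  qed
  have "countable T"
    using \<N> unfolding T_def countable_network_def by simp
  moreover have "(f -` A N \<inter> space M) \<inter> (g -` B N \<inter> space M) \<in> sets M" if "N \<in> T" for N
    using AB[OF that] f g by (auto intro!: measurable_sets)
  ultimately have "(\<Union>N\<in>T. (f -` A N \<inter> space M) \<inter> (g -` B N \<inter> space M)) \<in> sets M"
    by (rule sets.countable_UN'')
  also have "(\<Union>N\<in>T. (f -` A N \<inter> space M) \<inter> (g -` B N \<inter> space M)) = (\<lambda>x. (f x, g x)) -` S \<inter> space M"
    by (subst S) blast
  finally show "(\<lambda>x. (f x, g x)) -` S \<inter> space M \<in> sets M" .
qed

lemma Polish_space_imp_Hausdorff_space: "Polish_space X \<Longrightarrow> Hausdorff_space X"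
  unfolding Polish_space_def
  by (intro metrizable_imp_Hausdorff_space completely_metrizable_imp_metrizable_space) simp

lemma Hausdorff_space_euclidean_Times:
  assumes "Hausdorff_space (euclidean :: 'a::topological_space topology)"
    and "Hausdorff_space (euclidean :: 'b::topological_space topology)"
  shows "Hausdorff_space (euclidean :: ('a \<times> 'b) topology)"
  using assms Hausdorff_space_prod_topology[of "euclidean :: 'a topology" "euclidean :: 'b topology"]
  by simp

section \<open>Evaluation of decision problems\<close>

lemma rv_seq_component_measurable:
  fixes \<beta> :: "'w::topological_space \<Rightarrow> nat \<Rightarrow> 'a::topological_space"
  assumes "\<beta> \<in> rv_seq"
  shows "(\<lambda>\<omega>. \<beta> \<omega> i) \<in> borel_measurable borel"
proof -
  have "(\<lambda>_. i) \<in> (rv_nat :: ('w \<Rightarrow> nat) set)"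
    by (simp add: rv_nat_def)
  then show ?thesis
    using assms unfolding rv_seq_def rv_borel_def by (auto dest!: bspec[of _ _ "\<lambda>\<omega>. \<omega>"])
qed

lemma borel_measurable_graph_Souslin:
  fixes g :: "'w::topological_space \<Rightarrow> 'f::topological_space"
    and h :: "'w \<Rightarrow> 'r::topological_space"
  assumes "Polish_space (euclidean :: 'w topology)"
    and "Souslin_space (euclidean :: 'f topology)" "Souslin_space (euclidean :: 'r topology)"
    and "g \<in> borel_measurable borel" "h \<in> borel_measurable borel"
  shows "(\<lambda>\<omega>. (\<omega>, g \<omega>, h \<omega>)) \<in> borel_measurable borel"
proof -
  obtain \<N>\<^sub>w :: "'w set set" and \<N>\<^sub>f :: "'f set set" and \<N>\<^sub>r :: "'r set set" where
    \<N>: "countable_network \<N>\<^sub>w" "countable_network \<N>\<^sub>f" "countable_network \<N>\<^sub>r"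
    using Polish_space_countable_network[OF assms(1)] Souslin_space_countable_network[OF assms(2)]
      Souslin_space_countable_network[OF assms(3)] by blast
  show ?thesis
    using assms(4,5)
    by (intro borel_measurable_Pair_countable_network[OF \<N>(1) countable_network_Times[OF \<N>(2,3)]]
        borel_measurable_Pair_countable_network[OF \<N>(2,3)]) simp_all
qed

theorem theorem5:
  assumes "Polish_space (euclidean :: 'w::topological_space topology)"
    and "Souslin_space (euclidean :: 'f::{order,topological_space} topology)"
    and "Souslin_space (euclidean :: 'r::{order,topological_space} topology)"
    and "borel_order_relation TYPE('f)"
    and "borel_order_relation TYPE('r)"
  shows "quasi_measurable
           (rv_prod3 (rv_DP :: ('w \<Rightarrow> ('f \<times> 'r) set) set) (rv_seq :: ('w \<Rightarrow> nat \<Rightarrow> 'f) set)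
                     (rv_seq :: ('w \<Rightarrow> nat \<Rightarrow> 'r) set))
           (rv_bool :: ('w \<Rightarrow> bool) set)
           ev"
  unfolding quasi_measurable_def rv_bool_def
proof (intro ballI CollectI)
  fix \<alpha> :: "'w \<Rightarrow> ('f \<times> 'r) set \<times> (nat \<Rightarrow> 'f) \<times> (nat \<Rightarrow> 'r)"
  assume "\<alpha> \<in> rv_prod3 (rv_DP :: ('w \<Rightarrow> ('f \<times> 'r) set) set) rv_seq rv_seq"
  then obtain dp xF xR where \<alpha>: "\<alpha> = (\<lambda>\<omega>. (dp \<omega>, xF \<omega>, xR \<omega>))"
    and dp: "dp \<in> rv_DP" and xF: "xF \<in> rv_seq" and xR: "xR \<in> rv_seq"
    unfolding rv_prod3_def by (intro that[of "\<lambda>\<omega>. fst (\<alpha> \<omega>)" "\<lambda>\<omega>. fst (snd (\<alpha> \<omega>))"]) auto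
  define S where "S = {(\<omega>, x, y). (x, y) \<in> dp \<omega>}"
  have "analytic_in euclidean S"
    using dp unfolding rv_DP_def S_def by blast
  moreover have "Hausdorff_space (euclidean :: ('w \<times> 'f \<times> 'r) topology)"
    using assms(2,3) Polish_space_imp_Hausdorff_space[OF assms(1)] unfolding Souslin_space_def
    by (intro Hausdorff_space_euclidean_Times) auto
  ultimately have "universally_measurable ((\<lambda>\<omega>. (\<omega>, xF \<omega> i, xR \<omega> i)) -` S)" for i
    using borel_measurable_graph_Souslin[OF assms(1-3) rv_seq_component_measurable[OF xF]
        rv_seq_component_measurable[OF xR]]
    by (rule universally_measurable_vimage_analytic)
  moreover have "{\<omega>. (ev \<circ> \<alpha>) \<omega>} = (\<Inter>i. (\<lambda>\<omega>. (\<omega>, xF \<omega> i, xR \<omega> i)) -` S)"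
    by (auto simp: \<alpha> S_def ev_def)
  ultimately show "universally_measurable {\<omega>. (ev \<circ> \<alpha>) \<omega>}"
    by (simp add: universally_measurable_INT)
qed

end
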